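(* Let $\bm M\in\mathcal{B}(N,r)$. Then there exist an integer $r'$ with $r\le r'\le rN$ and $\bm U\in\mathbb{R}^{r'\times rN}$ with $\bm M = \bm U^\top\bm U$ of the block form $$\bm U = \begin{bmatrix} \bm S_1 & \bm S_2 & \cdots & \bm S_N \\ \bm R_1 & \bm R_2 & \cdots & \bm R_N\end{bmatrix},$$ where $\bm S_i\in\mathbb{R}^{r\times r}$ are symmetric, $\bm S_1 = \bm I_r$, $\bm R_i\in\mathbb{R}^{(r'-r)\times r}$, $\bm R_1 = \bm 0$, and for all $i,j\in[N]$, $$\bm S_i^2 + \bm R_i^\top\bm R_i = \bm I_r,\qquad \bm S_i\bm S_j - \bm S_j\bm S_i + \bm R_i^\top\bm R_j - \bm R_j^\top\bm R_i = \bm 0.$$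
   Context: A matrix $\bm M \in \mathbb{R}^{rN\times rN}$ is viewed as an $N\times N$ array of $r\times r$ blocks, $\bm M_{[ij]}$ denoting block $(i,j)$. $\mathcal{B}(N,r)$ is the set of symmetric $\bm M \in \mathbb{R}^{rN\times rN}$ with $\bm M \succeq 0$, $\bm M_{[ii]} = \bm I_r$ for all $i$, and $\bm M_{[ij]} = \bm M_{[ij]}^\top$ for all $i,j$. *)

theory Defs
  imports "Jordan_Normal_Form.Matrix"
begin

definition psd_mat :: "real mat \<Rightarrow> bool" where
  "psd_mat M \<longleftrightarrow> M \<in> carrier_mat (dim_row M) (dim_row M) \<and>
     (\<forall>x \<in> carrier_vec (dim_row M). 0 \<le> x \<bullet> (M *\<^sub>v x))"

definition blk :: "nat \<Rightarrow> 'a mat \<Rightarrow> nat \<Rightarrow> nat \<Rightarrow> 'a mat" where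
  "blk r M i j = mat r r (\<lambda>(a,b). M $$ (r*i + a, r*j + b))"

definition Bset :: "nat \<Rightarrow> nat \<Rightarrow> real mat set" where
  "Bset N r = {M. M \<in> carrier_mat (r*N) (r*N) \<and> M = transpose_mat M \<and> psd_mat M \<and>
     (\<forall>i<N. blk r M i i = 1\<^sub>m r) \<and>
     (\<forall>i<N. \<forall>j<N. blk r M i j = transpose_mat (blk r M i j))}"

text \<open>Sub-blocks of U: S_i = rows 0..r-1, columns r*i..r*i+r-1;
  R_i = rows r..r'-1, same columns (0-based i).\<close>
definition Sblk :: "nat \<Rightarrow> 'a mat \<Rightarrow> nat \<Rightarrow> 'a mat" where
  "Sblk r U i = mat r r (\<lambda>(a,b). U $$ (a, r*i + b))"

definition Rblk :: "nat \<Rightarrow> 'a mat \<Rightarrow> nat \<Rightarrow> 'a mat" where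
  "Rblk r U i = mat (dim_row U - r) r (\<lambda>(a,b). U $$ (r + a, r*i + b))"

end

theory Submission
  imports Defs
begin

text \<open>Take U to be the transpose of a Cholesky factor of M (lower triangular, nonnegative
  diagonal), so M = U^T U with U square of size rN. Because the leading block of M is the
  identity, the first r rows of the Cholesky factor are unit vectors; hence the first block
  column of U is I over 0. Then block (1,j) of U^T U is S_j, which is symmetric since the
  blocks of M are, and the remaining identities are just the block equations M_[ii] = I
  and M_[ij] = M_[ji] written out for U^T U.\<close>

definition quad_form :: "(nat \<Rightarrow> nat \<Rightarrow> real) \<Rightarrow> nat \<Rightarrow> (nat \<Rightarrow> real) \<Rightarrow> real" where
  "quad_form A n x = (\<Sum>i<n. \<Sum>j<n. x i * A i j * x j)"

lemma quad_form_add_unit: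
  assumes sym: "\<And>i j. i < n \<Longrightarrow> j < n \<Longrightarrow> A i j = A j i" and "k < n"
  shows "quad_form A n (\<lambda>i. x i + (if i = k then c else 0)) =
         quad_form A n x + 2 * c * (\<Sum>j<n. A k j * x j) + c\<^sup>2 * A k k"
proof -
  define e :: "nat \<Rightarrow> real" where "e i = (if i = k then 1 else 0)" for i
  have delta: "(\<Sum>i<n. e i * g i) = g k" for g
    using \<open>k < n\<close> by (simp add: e_def if_distrib[of "\<lambda>a. a * _"] cong: if_cong)
  have left: "(\<Sum>i<n. \<Sum>j<n. e i * A i j * y j) = (\<Sum>j<n. A k j * y j)" for y
    using delta by (simp add: mult.assoc flip: sum_distrib_left)
  have right: "(\<Sum>i<n. \<Sum>j<n. y i * A i j * e j) = (\<Sum>j<n. A k j * y j)" for y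
  proof -
    have "(\<Sum>i<n. \<Sum>j<n. y i * A i j * e j) = (\<Sum>i<n. y i * A i k)"
      using delta by (simp add: mult.assoc mult.commute[of _ "e _"] flip: sum_distrib_left)
    also have "\<dots> = (\<Sum>j<n. A k j * y j)"
      using sym \<open>k < n\<close> by (intro sum.cong) (auto simp: mult.commute)
    finally show ?thesis .
  qed
  have "(\<lambda>i. x i + (if i = k then c else 0)) = (\<lambda>i. x i + c * e i)"
    by (auto simp: e_def)
  then have "quad_form A n (\<lambda>i. x i + (if i = k then c else 0)) =
      quad_form A n x + c * (\<Sum>i<n. \<Sum>j<n. e i * A i j * x j)
      + c * (\<Sum>i<n. \<Sum>j<n. x i * A i j * e j) + c\<^sup>2 * (\<Sum>i<n. \<Sum>j<n. e i * A i j * e j)"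
    by (simp add: quad_form_def algebra_simps sum.distrib sum_distrib_left power2_eq_square)
  also have "\<dots> = quad_form A n x + 2 * c * (\<Sum>j<n. A k j * x j) + c\<^sup>2 * A k k"
    using left[of x] right[of x] left[of e] delta[of "A k"] by (simp add: mult.commute)
  finally show ?thesis .
qed

lemma quad_form_zero [simp]: "quad_form A n (\<lambda>_. 0) = 0"
  by (simp add: quad_form_def)

lemma quad_form_unit:
  assumes "\<And>i j. i < n \<Longrightarrow> j < n \<Longrightarrow> A i j = A j i" and "k < n"
  shows "quad_form A n (\<lambda>i. if i = k then 1 else 0) = A k k"
  using quad_form_add_unit[OF assms, where x = "\<lambda>_. 0" and c = 1] by simp

lemma quad_form_minus_rank_one:
  "quad_form (\<lambda>i j. A i j - v i * v j) n x = quad_form A n x - (\<Sum>i<n. v i * x i)\<^sup>2"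
proof -
  have "(\<Sum>i<n. v i * x i)\<^sup>2 = (\<Sum>i<n. \<Sum>j<n. x i * (v i * v j) * x j)"
    by (simp add: power2_eq_square sum_product algebra_simps)
  then show ?thesis
    by (simp add: quad_form_def algebra_simps sum_subtractf)
qed

lemma psd_zero_diagonal_imp_zero_row:
  assumes sym: "\<And>i j. i < n \<Longrightarrow> j < n \<Longrightarrow> A i j = A j i"
    and psd: "\<And>x. 0 \<le> quad_form A n x"
    and "k < n" "j < n" "A k k = 0"
  shows "A k j = 0"
proof (rule ccontr)
  assume nz: "A k j \<noteq> 0"
  define c where "c = - (A j j + 1) / (2 * A k j)"
  have "0 \<le> quad_form A n (\<lambda>i. (if i = j then 1 else 0) + (if i = k then c else 0))"
    by (rule psd)
  also have "\<dots> = A j j + 2 * c * A k j"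
    using quad_form_add_unit[OF sym \<open>k < n\<close>] quad_form_unit[OF sym \<open>j < n\<close>] \<open>j < n\<close> \<open>A k k = 0\<close>
    by (simp add: if_distrib[of "\<lambda>a. _ * a"] cong: if_cong)
  also have "\<dots> = -1"
    using nz by (simp add: c_def field_simps)
  finally show False by simp
qed

text \<open>The matrix below is the Schur complement of the pivot A k k; its form at x is the
  minimum of the form of A along the line through x in the k-th coordinate direction.\<close>
lemma psd_minus_pivot_column:
  assumes sym: "\<And>i j. i < n \<Longrightarrow> j < n \<Longrightarrow> A i j = A j i"
    and psd: "\<And>x. 0 \<le> quad_form A n x"
    and "k < n" "0 < A k k"
  shows "0 \<le> quad_form (\<lambda>i j. A i j - A i k / sqrt (A k k) * (A j k / sqrt (A k k))) n x"
proof -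
  define S where "S = (\<Sum>j<n. A k j * x j)"
  have "(\<Sum>i<n. A i k / sqrt (A k k) * x i) = S / sqrt (A k k)"
    using sym \<open>k < n\<close> by (auto simp: S_def sum_divide_distrib mult.commute intro: sum.cong)
  then have "quad_form (\<lambda>i j. A i j - A i k / sqrt (A k k) * (A j k / sqrt (A k k))) n x
      = quad_form A n x - S\<^sup>2 / A k k"
    using \<open>0 < A k k\<close> quad_form_minus_rank_one[of A "\<lambda>i. A i k / sqrt (A k k)"]
    by (simp add: power_divide)
  also have "\<dots> = quad_form A n (\<lambda>i. x i + (if i = k then - S / A k k else 0))"
    using \<open>0 < A k k\<close> by (simp add: quad_form_add_unit[OF sym \<open>k < n\<close>] flip: S_def)
      (simp add: field_simps power2_eq_square)
  also have "\<dots> \<ge> 0" by (rule psd)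
  finally show ?thesis .
qed

lemma cholesky_factorization_from:
  assumes "n - k = m"
    and sym: "\<And>i j. i < n \<Longrightarrow> j < n \<Longrightarrow> A i j = A j i"
    and psd: "\<And>x. 0 \<le> quad_form A n x"
    and zero: "\<And>i j. i < n \<Longrightarrow> j < n \<Longrightarrow> i < k \<Longrightarrow> A i j = 0"
  shows "\<exists>L. (\<forall>i<n. \<forall>j<n. A i j = (\<Sum>t<n. L i t * L j t)) \<and>
    (\<forall>i t. i < t \<or> t < k \<longrightarrow> L i t = 0) \<and> (\<forall>i. 0 \<le> L i i)"
  using assms
proof (induction m arbitrary: k A)
  case 0
  then show ?case
    by (intro exI[of _ "\<lambda>_ _. 0"]) auto
next
  case (Suc m)
  note sym = Suc.prems(2) and psd = Suc.prems(3) and zero = Suc.prems(4)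
  have "k < n" "n - Suc k = m" using Suc.prems(1) by auto
  have "0 \<le> A k k"
    using psd[of "\<lambda>i. if i = k then 1 else 0"] quad_form_unit[OF sym \<open>k < n\<close>] by simp
  then consider "A k k = 0" | "0 < A k k" by linarith
  then show ?case
  proof cases
    case 1
    have "A i j = 0" if "i < n" "j < n" "i < Suc k" for i j
      using zero psd_zero_diagonal_imp_zero_row[OF sym psd \<open>k < n\<close> _ 1] that
      by (cases "i = k") auto
    from Suc.IH[OF \<open>n - Suc k = m\<close> sym psd this] obtain L where
      "\<forall>i<n. \<forall>j<n. A i j = (\<Sum>t<n. L i t * L j t)"
      "\<forall>i t. i < t \<or> t < Suc k \<longrightarrow> L i t = 0" "\<forall>i. 0 \<le> L i i"
      by blast
    then show ?thesis by (intro exI[of _ L]) auto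
  next
    case 2
    define v where "v i = A i k / sqrt (A k k)" for i
    define A' where "A' i j = A i j - v i * v j" for i j
    have vk: "v k * v j = A k j" if "j < n" for j
      using 2 sym[OF that \<open>k < n\<close>] by (simp add: v_def real_div_sqrt)
    have "\<exists>L. (\<forall>i<n. \<forall>j<n. A' i j = (\<Sum>t<n. L i t * L j t)) \<and>
      (\<forall>i t. i < t \<or> t < Suc k \<longrightarrow> L i t = 0) \<and> (\<forall>i. 0 \<le> L i i)"
    proof (rule Suc.IH[OF \<open>n - Suc k = m\<close>])
      show "A' i j = A' j i" if "i < n" "j < n" for i j
        using sym[OF that] by (simp add: A'_def mult.commute)
      show "0 \<le> quad_form A' n x" for x
        unfolding A'_def v_def by (rule psd_minus_pivot_column[OF sym psd \<open>k < n\<close> 2])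
      show "A' i j = 0" if "i < n" "j < n" "i < Suc k" for i j
        using that zero[OF that(1,2)] zero[OF that(1) \<open>k < n\<close>] vk[OF that(2)]
        by (cases "i = k") (auto simp: A'_def v_def)
    qed
    then obtain L where L: "\<forall>i<n. \<forall>j<n. A' i j = (\<Sum>t<n. L i t * L j t)"
      "\<forall>i t. i < t \<or> t < Suc k \<longrightarrow> L i t = 0" "\<forall>i. 0 \<le> L i i"
      by blast
    define L' where "L' i t = (if t = k then v i else L i t)" for i t
    show ?thesis
    proof (intro exI[of _ L'] conjI allI impI)
      fix i j assume "i < n" "j < n"
      have "(\<Sum>t<n. L' i t * L' j t) = (\<Sum>t<n. L i t * L j t + (if t = k then v i * v j else 0))"
        using L(2) by (intro sum.cong) (auto simp: L'_def)
      also have "\<dots> = A i j"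
        using L(1) \<open>i < n\<close> \<open>j < n\<close> \<open>k < n\<close> by (simp add: sum.distrib A'_def algebra_simps)
      finally show "A i j = (\<Sum>t<n. L' i t * L' j t)" ..
    next
      fix i t assume "i < t \<or> t < k"
      then show "L' i t = 0"
        using L(2) zero[of i k] \<open>k < n\<close> by (auto simp: L'_def v_def)
    next
      show "0 \<le> L' i i" for i
        using L(3) 2 by (simp add: L'_def v_def)
    qed
  qed
qed

lemma cholesky_factorization:
  assumes "\<And>i j. i < n \<Longrightarrow> j < n \<Longrightarrow> A i j = A j i" and "\<And>x. 0 \<le> quad_form A n x"
  shows "\<exists>L. (\<forall>i<n. \<forall>j<n. A i j = (\<Sum>t<n. L i t * L j t)) \<and>
    (\<forall>i t. i < t \<longrightarrow> L i t = 0) \<and> (\<forall>i. 0 \<le> L i i)"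
  using cholesky_factorization_from[OF refl assms, of 0] by auto

lemma cholesky_factor_leading_unit_rows:
  fixes A L :: "nat \<Rightarrow> nat \<Rightarrow> real"
  assumes fac: "\<And>i j. i < n \<Longrightarrow> j < n \<Longrightarrow> A i j = (\<Sum>t<n. L i t * L j t)"
    and tri: "\<And>i t. i < t \<Longrightarrow> L i t = 0"
    and diag: "\<And>i. 0 \<le> L i i"
    and "r \<le> n"
    and id: "\<And>i j. i < r \<Longrightarrow> j < r \<Longrightarrow> A i j = (if i = j then 1 else 0)"
  shows "i < r \<Longrightarrow> L i t = (if i = t then 1 else 0)"
proof (induction i arbitrary: t rule: less_induct)
  case (less i)
  have "i < n" using less.prems \<open>r \<le> n\<close> by simp
  have "L i j = 0" if "j < i" for j
  proof -
    have "L j t = (if j = t then 1 else 0)" for t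
      using less.IH[OF that] that less.prems by simp
    then have "(\<Sum>t<n. L i t * L j t) = L i j"
      using that \<open>i < n\<close> by (simp add: if_distrib[of "\<lambda>a. _ * a"] cong: if_cong)
    then show ?thesis
      using fac[of i j] id[of i j] that less.prems \<open>i < n\<close> by simp
  qed
  then have off: "L i t = 0" if "t \<noteq> i" for t
    using tri[of i t] that by (cases "t < i") auto
  have "(\<Sum>t<n. L i t * L i t) = (\<Sum>t<n. if t = i then L i i * L i i else 0)"
    using off by (intro sum.cong) auto
  then have "(L i i)\<^sup>2 = A i i"
    using fac[OF \<open>i < n\<close> \<open>i < n\<close>] \<open>i < n\<close> by (simp add: power2_eq_square)
  then have "L i i = 1"
    using id[OF less.prems less.prems] diag[of i] by (simp add: power2_eq_1_iff)
  then show ?case using off by auto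
qed

lemma symmetric_mat_index:
  assumes "M \<in> carrier_mat n n" "M = transpose_mat M" "p < n" "q < n"
  shows "M $$ (p, q) = M $$ (q, p)"
proof -
  have "M $$ (p, q) = transpose_mat M $$ (p, q)" using assms(2) by simp
  then show ?thesis using assms(1,3,4) by simp
qed

lemma psd_mat_quad_form_nonneg:
  assumes "psd_mat M" "M \<in> carrier_mat n n"
  shows "0 \<le> quad_form (\<lambda>i j. M $$ (i, j)) n x"
proof -
  have "0 \<le> vec n x \<bullet> (M *\<^sub>v vec n x)"
    using assms unfolding psd_mat_def by auto
  also have "vec n x \<bullet> (M *\<^sub>v vec n x) = quad_form (\<lambda>i j. M $$ (i, j)) n x"
    using assms(2) by (simp add: quad_form_def scalar_prod_def atLeast0LessThan
        sum_distrib_left mult.assoc mult.left_commute)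
  finally show ?thesis .
qed

lemma psd_mat_gram_factor_leading_identity:
  assumes "M \<in> carrier_mat n n" "M = transpose_mat M" "psd_mat M" "r \<le> n"
    and id: "\<And>a b. a < r \<Longrightarrow> b < r \<Longrightarrow> M $$ (a, b) = (if a = b then 1 else 0)"
  shows "\<exists>U. U \<in> carrier_mat n n \<and> M = transpose_mat U * U \<and>
    (\<forall>a<n. \<forall>b<r. U $$ (a, b) = (if a = b then 1 else 0))"
proof -
  obtain L where fac: "\<forall>i<n. \<forall>j<n. M $$ (i, j) = (\<Sum>t<n. L i t * L j t)"
    and tri: "\<forall>i t. i < t \<longrightarrow> L i t = 0" and diag: "\<forall>i. 0 \<le> L i i"
    using cholesky_factorization[OF symmetric_mat_index[OF assms(1,2)]
        psd_mat_quad_form_nonneg[OF assms(3,1)]]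
    by blast
  have unit: "L b a = (if b = a then 1 else 0)" if "b < r" for a b
    using cholesky_factor_leading_unit_rows[of n "\<lambda>i j. M $$ (i, j)" L r] fac tri diag
      \<open>r \<le> n\<close> id that by blast
  define U where "U = mat n n (\<lambda>(a, b). L b a)"
  have "M = transpose_mat U * U"
    using assms(1) fac
    by (intro eq_matI) (auto simp: U_def scalar_prod_def atLeast0LessThan)
  moreover have "U $$ (a, b) = (if a = b then 1 else 0)" if "a < n" "b < r" for a b
    using that \<open>r \<le> n\<close> unit[of b a] by (auto simp: U_def)
  ultimately show ?thesis
    by (intro exI[of _ U]) (auto simp: U_def)
qed

lemma block_index_less:
  assumes "i < N" "a < r"
  shows "r * i + a < r * (N :: nat)"
proof -
  have "r * i + a < r * (i + 1)" using assms(2) by simp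
  also have "\<dots> \<le> r * N" using assms(1) by (intro mult_le_mono2) simp
  finally show ?thesis .
qed

lemma blk_transpose:
  assumes "M \<in> carrier_mat (r * N) (r * N)" "M = transpose_mat M" "i < N" "j < N"
  shows "blk r M j i = transpose_mat (blk r M i j)"
proof (rule eq_matI)
  fix a b
  assume "a < dim_row (transpose_mat (blk r M i j))" "b < dim_col (transpose_mat (blk r M i j))"
  then have "a < r" "b < r" by (auto simp: blk_def)
  then show "blk r M j i $$ (a, b) = transpose_mat (blk r M i j) $$ (a, b)"
    using symmetric_mat_index[OF assms(1,2) block_index_less[OF assms(4) \<open>a < r\<close>]
        block_index_less[OF assms(3) \<open>b < r\<close>]]
    by (simp add: blk_def)
qed (auto simp: blk_def)

lemma sum_lessThan_add:
  fixes k :: nat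
  shows "(\<Sum>c<r + k. f c) = (\<Sum>c<r. f c) + (\<Sum>c<k. f (r + c) :: 'a :: comm_monoid_add)"
  by (induction k) (simp_all add: add.assoc)

lemma blk_transpose_mult_self:
  fixes U :: "'a :: comm_ring_1 mat"
  assumes "U \<in> carrier_mat m (r * N)" "r \<le> m" "i < N" "j < N"
  shows "blk r (transpose_mat U * U) i j
    = transpose_mat (Sblk r U i) * Sblk r U j + transpose_mat (Rblk r U i) * Rblk r U j"
proof (rule eq_matI)
  fix a b
  assume "a < dim_row (transpose_mat (Sblk r U i) * Sblk r U j
      + transpose_mat (Rblk r U i) * Rblk r U j)"
    and "b < dim_col (transpose_mat (Sblk r U i) * Sblk r U j
      + transpose_mat (Rblk r U i) * Rblk r U j)"
  then have "a < r" "b < r" by (auto simp: Sblk_def Rblk_def)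
  have "m = r + (m - r)" using \<open>r \<le> m\<close> by simp
  then have split: "(\<Sum>c<m. f c) = (\<Sum>c<r. f c) + (\<Sum>c<m - r. f (r + c))" for f :: "nat \<Rightarrow> 'a"
    by (metis sum_lessThan_add)
  show "blk r (transpose_mat U * U) i j $$ (a, b)
    = (transpose_mat (Sblk r U i) * Sblk r U j + transpose_mat (Rblk r U i) * Rblk r U j) $$ (a, b)"
    using assms \<open>a < r\<close> \<open>b < r\<close>
      block_index_less[OF assms(3) \<open>a < r\<close>] block_index_less[OF assms(4) \<open>b < r\<close>]
    by (simp add: blk_def Sblk_def Rblk_def scalar_prod_def atLeast0LessThan
        split[of "\<lambda>c. U $$ (c, r * i + a) * U $$ (c, r * j + b)"])
qed (auto simp: blk_def Sblk_def Rblk_def)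

lemma add_eq_add_imp_diff_eq_zero:
  fixes X Y Z W :: "'a :: ab_group_add mat"
  assumes "X \<in> carrier_mat n m" "Y \<in> carrier_mat n m"
    and "Z \<in> carrier_mat n m" "W \<in> carrier_mat n m"
    and "X + Z = Y + W"
  shows "X - Y + Z - W = 0\<^sub>m n m"
proof (rule eq_matI)
  fix a b assume "a < dim_row (0\<^sub>m n m :: 'a mat)" "b < dim_col (0\<^sub>m n m :: 'a mat)"
  then have "a < n" "b < m" by auto
  then have "X $$ (a, b) + Z $$ (a, b) = Y $$ (a, b) + W $$ (a, b)"
    using arg_cong[OF assms(5), of "\<lambda>A. A $$ (a, b)"] assms(1-4) by simp
  then show "(X - Y + Z - W) $$ (a, b) = 0\<^sub>m n m $$ (a, b)"
    using \<open>a < n\<close> \<open>b < m\<close> assms(1-4) by (simp add: algebra_simps)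
qed (use assms in auto)

lemma Bset_gram_factor_blocks:
  assumes "M \<in> Bset N r" "0 < N"
    and U: "U \<in> carrier_mat m (r * N)" "r \<le> m" "M = transpose_mat U * U"
    and U0: "Sblk r U 0 = 1\<^sub>m r" "Rblk r U 0 = 0\<^sub>m (m - r) r"
  shows "(\<forall>i<N. Sblk r U i = transpose_mat (Sblk r U i)) \<and>
     (\<forall>i<N. \<forall>j<N.
        Sblk r U i * Sblk r U i + transpose_mat (Rblk r U i) * Rblk r U i = 1\<^sub>m r \<and>
        Sblk r U i * Sblk r U j - Sblk r U j * Sblk r U i
          + transpose_mat (Rblk r U i) * Rblk r U j
          - transpose_mat (Rblk r U j) * Rblk r U i = 0\<^sub>m r r)"
proof -
  have M: "M \<in> carrier_mat (r * N) (r * N)" "M = transpose_mat M"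
    and diag: "\<And>i. i < N \<Longrightarrow> blk r M i i = 1\<^sub>m r"
    and blk_sym: "\<And>i j. i < N \<Longrightarrow> j < N \<Longrightarrow> blk r M i j = transpose_mat (blk r M i j)"
    using assms(1) unfolding Bset_def by auto
  have S: "Sblk r U i \<in> carrier_mat r r" and R: "Rblk r U i \<in> carrier_mat (m - r) r" for i
    using U(1) by (auto simp: Sblk_def Rblk_def)
  have SS: "Sblk r U i * Sblk r U j \<in> carrier_mat r r"
    and RR: "transpose_mat (Rblk r U i) * Rblk r U j \<in> carrier_mat r r" for i j
    using mult_carrier_mat[OF S S] mult_carrier_mat[OF transpose_carrier_mat[THEN iffD2, OF R] R]
    by blast+
  have gram: "blk r M i j
      = transpose_mat (Sblk r U i) * Sblk r U j + transpose_mat (Rblk r U i) * Rblk r U j"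
    if "i < N" "j < N" for i j
    using blk_transpose_mult_self[OF U(1,2) that] U(3) by simp
  have S_top: "Sblk r U j = blk r M 0 j" if "j < N" for j
    using gram[OF \<open>0 < N\<close> that] U0 S[of j] R[of j] by simp
  have S_sym: "Sblk r U i = transpose_mat (Sblk r U i)" if "i < N" for i
    using S_top[OF that] blk_sym[OF \<open>0 < N\<close> that] by simp
  have gram': "Sblk r U i * Sblk r U j + transpose_mat (Rblk r U i) * Rblk r U j = blk r M i j"
    if "i < N" "j < N" for i j
    using gram[OF that] S_sym[OF that(1)] by simp
  show ?thesis
  proof (intro conjI allI impI)
    fix i j assume ij: "i < N" "j < N"
    show "Sblk r U i * Sblk r U i + transpose_mat (Rblk r U i) * Rblk r U i = 1\<^sub>m r"
      using gram'[OF ij(1) ij(1)] diag[OF ij(1)] by simp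
    have "blk r M j i = blk r M i j"
      using blk_transpose[OF M ij] blk_sym[OF ij] by simp
    then have "Sblk r U i * Sblk r U j + transpose_mat (Rblk r U i) * Rblk r U j
        = Sblk r U j * Sblk r U i + transpose_mat (Rblk r U j) * Rblk r U i"
      using gram'[OF ij] gram'[OF ij(2,1)] by simp
    then show "Sblk r U i * Sblk r U j - Sblk r U j * Sblk r U i
          + transpose_mat (Rblk r U i) * Rblk r U j
          - transpose_mat (Rblk r U j) * Rblk r U i = 0\<^sub>m r r"
      using SS RR by (intro add_eq_add_imp_diff_eq_zero)
  qed (use S_sym in auto)
qed

theorem proposition8:
  fixes N r :: nat and M :: "real mat"
  assumes "0 < N"
    and "M \<in> Bset N r"
  shows "\<exists>r' (U :: real mat).
     r \<le> r' \<and> r' \<le> r * N \<and> U \<in> carrier_mat r' (r * N) \<and>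
     M = transpose_mat U * U \<and>
     (\<forall>i<N. Sblk r U i = transpose_mat (Sblk r U i)) \<and>
     Sblk r U 0 = 1\<^sub>m r \<and>
     Rblk r U 0 = 0\<^sub>m (r' - r) r \<and>
     (\<forall>i<N. \<forall>j<N.
        Sblk r U i * Sblk r U i + transpose_mat (Rblk r U i) * Rblk r U i = 1\<^sub>m r \<and>
        Sblk r U i * Sblk r U j - Sblk r U j * Sblk r U i
          + transpose_mat (Rblk r U i) * Rblk r U j
          - transpose_mat (Rblk r U j) * Rblk r U i = 0\<^sub>m r r)"
proof -
  have M: "M \<in> carrier_mat (r * N) (r * N)" "M = transpose_mat M" "psd_mat M"
    and M00: "blk r M 0 0 = 1\<^sub>m r"
    using assms unfolding Bset_def by auto
  have "r \<le> r * N" using \<open>0 < N\<close> by simp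
  have "M $$ (a, b) = (if a = b then 1 else 0)" if "a < r" "b < r" for a b
    using arg_cong[OF M00, of "\<lambda>X. X $$ (a, b)"] that by (simp add: blk_def)
  then obtain U where U: "U \<in> carrier_mat (r * N) (r * N)" "M = transpose_mat U * U"
    and unit: "\<forall>a<r * N. \<forall>b<r. U $$ (a, b) = (if a = b then 1 else 0)"
    using psd_mat_gram_factor_leading_identity[OF M \<open>r \<le> r * N\<close>] by blast
  have "U $$ (a, b) = (if a = b then 1 else 0)" if "a < r" "b < r" for a b
    using unit that \<open>r \<le> r * N\<close> by (meson less_le_trans)
  then have S0: "Sblk r U 0 = 1\<^sub>m r"
    by (auto simp: Sblk_def intro!: eq_matI)
  have R0: "Rblk r U 0 = 0\<^sub>m (r * N - r) r"
    using unit U(1) by (auto simp: Rblk_def intro!: eq_matI)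
  show ?thesis
    using Bset_gram_factor_blocks[OF assms(2,1) U(1) \<open>r \<le> r * N\<close> U(2) S0 R0]
      U S0 R0 \<open>r \<le> r * N\<close>
    by (intro exI[of _ "r * N"] exI[of _ U]) simp
qed

end
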